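(* Let $p$ be a prime, let $n\geq 1$ and $k\geq 1$ be integers, and let $q$ be an integer with $\gcd(q,p)=1$. Let $\Gamma_{p,n,q}$ be the directed graph whose vertex set is $\mathbb{Z}_{p^n}=\{0,1,\dots,p^n-1\}$ and whose edge set is $$E=\{(x,\, q^y \bmod p^n)\;:\; x\in\mathbb{Z}_{p^n},\ y\in\mathbb{Z}_{\geq 0},\ y\equiv x \pmod{p^n}\}.$$ Let $C_{p,n,q}(k)$ be the number of $k$-cycles with marked initial vertex in $\Gamma_{p,n,q}$, i.e. the number of sequences $(x_0,x_1,\dots,x_{k-1})$ of vertices such that $(x_i,x_{i+1})\in E$ for $0\leq i\leq k-2$ and $(x_{k-1},x_0)\in E$ (equivalently, $C_{p,n,q}(k)=\mathrm{trace}(A^k)$ where $A$ is the adjacency matrix of $\Gamma_{p,n,q}$). Then $C_{p,n,q}(k)\leq (p-1)^k$. Moreover, if $q$ is a primitive root modulo $p$, then $C_{p,n,q}(k)=(p-1)^k$.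
   Context: Here $q^y \bmod p^n$ denotes the representative of $q^y$ modulo $p^n$ in $\{0,1,\dots,p^n-1\}$. A $k$-cycle with marked initial vertex is counted as a closed walk of length $k$ (vertices may repeat, loops are allowed). *)

theory Defs
  imports "HOL-Number_Theory.Number_Theory"
begin

definition gamma_vertices :: "nat \<Rightarrow> nat \<Rightarrow> int set" where
  "gamma_vertices p n = {0..<int p ^ n}"

definition gamma_edge :: "nat \<Rightarrow> nat \<Rightarrow> int \<Rightarrow> int \<Rightarrow> int \<Rightarrow> bool" where
  "gamma_edge p n q x z \<longleftrightarrow>
     x \<in> gamma_vertices p n \<and>
     (\<exists>y::nat. [int y = x] (mod (int p ^ n)) \<and> z = q ^ y mod (int p ^ n))"

definition gamma_cycles :: "nat \<Rightarrow> nat \<Rightarrow> int \<Rightarrow> nat \<Rightarrow> nat" where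
  "gamma_cycles p n q k = card {xs :: int list. length xs = k \<and> set xs \<subseteq> gamma_vertices p n \<and>
       (\<forall>i<k. gamma_edge p n q (xs ! i) (xs ! ((i + 1) mod k)))}"

end

theory Submission
  imports Defs
begin

text \<open>
  Let \<open>x \<rightarrow> z\<close> and \<open>x' \<rightarrow> z'\<close> be edges with \<open>x \<equiv> x' (mod p^b)\<close> and \<open>z \<equiv> z' (mod p)\<close>. Then
  \<open>z \<equiv> z' (mod p^(b+1))\<close>: the exponents differ by \<open>p^b m\<close>, Fermat's little theorem forces
  \<open>q^m \<equiv> 1 (mod p)\<close>, and raising to the power \<open>p^b\<close> lifts this to \<open>p^(b+1)\<close>. Going \<open>n\<close> times
  around a closed walk, it is therefore determined by the residues mod \<open>p\<close> of its vertices,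
  all of which are nonzero; hence at most \<open>(p - 1)^k\<close> closed walks of length \<open>k\<close>. If \<open>q\<close> is a
  primitive root, every vertex has a successor of any prescribed nonzero residue, these
  successor maps contract \<open>p\<close>-adically, and a fixed point of their composite closes a walk
  through any prescribed residue sequence.
\<close>

lemma fermat_theorem_int:
  assumes "prime p" and "coprime a (int p)"
  shows "[a ^ (p - 1) = 1] (mod int p)"
  using residues.euler_theorem[of "int p" a] assms prime_gt_1_nat[of p] totient_prime[of p]
  by (simp add: residues_def)

lemma fermat_little_int:
  assumes p: "prime p"
  shows "[(a::int) ^ p = a] (mod int p)"
proof (cases "coprime a (int p)")
  case True
  have "a ^ p = a * a ^ (p - 1)"
    using prime_gt_0_nat[OF p] by (simp add: power_eq_if)
  also have "[a * a ^ (p - 1) = a * 1] (mod int p)"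
    using fermat_theorem_int[OF p True] by (rule cong_scalar_left)
  finally show ?thesis by simp
next
  case False
  then have "int p dvd a"
    using p prime_imp_coprime[of "int p" a] by (auto simp: coprime_commute)
  then show ?thesis
    using dvd_power[of p a] prime_gt_0_nat[OF p] unfolding cong_iff_dvd_diff
    by (meson dvd_diff dvd_trans)
qed

lemma power_prime_power_cong_self:
  assumes p: "prime p"
  shows "[(a::int) ^ (p ^ b) = a] (mod int p)"
proof (induction b)
  case (Suc b)
  have "a ^ (p ^ Suc b) = (a ^ p) ^ (p ^ b)"
    by (simp add: power_mult[symmetric] mult.commute)
  also have "[(a ^ p) ^ (p ^ b) = a ^ (p ^ b)] (mod int p)"
    using fermat_little_int[OF p] by (rule cong_pow)
  finally show ?case
    using Suc.IH by (rule cong_trans)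
qed auto

text \<open>Since \<open>u \<equiv> 1 (mod p)\<close>, the factor \<open>1 + u + \<dots> + u^(p-1)\<close> of \<open>u^p - 1\<close> is divisible by \<open>p\<close>.\<close>
lemma cong_one_power_prime_lift:
  assumes "j \<ge> 1" and u: "[(u::int) = 1] (mod int p ^ j)"
  shows "[u ^ p = 1] (mod int p ^ Suc j)"
proof -
  have "[u = 1] (mod int p)"
    using cong_dvd_modulus[OF u] \<open>j \<ge> 1\<close> by (simp add: dvd_power)
  then have "[(\<Sum>i<p. u ^ i) = (\<Sum>i<p. 1 ^ i)] (mod int p)"
    by (intro cong_sum cong_pow)
  then have "int p dvd (\<Sum>i<p. u ^ i)"
    by (simp add: cong_0_iff[symmetric] cong_def)
  moreover have "int p ^ j dvd u - 1"
    using u by (simp add: cong_iff_dvd_diff)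
  ultimately have "int p ^ Suc j dvd (u - 1) * (\<Sum>i<p. u ^ i)"
    by (metis mult_dvd_mono power_Suc2)
  then show ?thesis
    by (simp add: cong_iff_dvd_diff power_diff_1_eq)
qed

lemma cong_one_power_prime_power:
  assumes "[(w::int) = 1] (mod int p)"
  shows "[w ^ (p ^ b) = 1] (mod int p ^ Suc b)"
proof (induction b)
  case (Suc b)
  have "w ^ (p ^ Suc b) = (w ^ (p ^ b)) ^ p"
    by (simp add: power_mult[symmetric] mult.commute)
  with cong_one_power_prime_lift[OF _ Suc.IH] show ?case
    by simp
qed (use assms in simp)

text \<open>Writing \<open>y' = y + p^b m\<close>, Fermat gives \<open>q^m \<equiv> (q^m)^(p^b) \<equiv> 1 (mod p)\<close>, which lifts to
  \<open>(q^m)^(p^b) \<equiv> 1 (mod p^(b+1))\<close>.\<close>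
lemma power_cong_prime_power_lift:
  fixes q :: int and y y' :: nat
  assumes p: "prime p" and q: "coprime q (int p)"
    and exps: "[int y = int y'] (mod int p ^ b)" and pows: "[q ^ y = q ^ y'] (mod int p)"
  shows "[q ^ y = q ^ y'] (mod int p ^ Suc b)"
proof -
  have lift: "[q ^ y = q ^ y'] (mod int p ^ Suc b)"
    if le: "y \<le> y'" and exps: "[int y = int y'] (mod int p ^ b)"
      and pows: "[q ^ y = q ^ y'] (mod int p)" for y y'
  proof -
    have "int (p ^ b) dvd int (y' - y)"
      using exps le by (simp add: cong_iff_dvd_diff dvd_diff_commute of_nat_diff)
    then obtain m where m: "y' = y + p ^ b * m"
      using le by (metis int_dvd_int_iff dvdE le_add_diff_inverse)
    then have y': "q ^ y' = q ^ y * (q ^ m) ^ (p ^ b)"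
      by (simp add: power_add power_mult[symmetric] mult.commute)
    have "[q ^ y * 1 = q ^ y * (q ^ m) ^ (p ^ b)] (mod int p)"
      using pows y' by simp
    moreover have "coprime (q ^ y) (int p)"
      using q by simp
    ultimately have "[1 = (q ^ m) ^ (p ^ b)] (mod int p)"
      using cong_mult_lcancel by blast
    moreover have "[(q ^ m) ^ (p ^ b) = q ^ m] (mod int p)"
      by (rule power_prime_power_cong_self[OF p])
    ultimately have "[q ^ m = 1] (mod int p)"
      by (meson cong_sym cong_trans)
    then have "[q ^ y * (q ^ m) ^ (p ^ b) = q ^ y * 1] (mod int p ^ Suc b)"
      by (intro cong_scalar_left cong_one_power_prime_power)
    then show ?thesis
      using y' by (simp add: cong_sym)
  qed
  show ?thesis
    using lift[of y y'] lift[of y' y] exps pows by (meson cong_sym nat_le_linear)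
qed

lemma cong_less_modulus_unique_int:
  fixes x y m :: int
  assumes "[x = y] (mod m)" and "x \<in> {0..<m}" and "y \<in> {0..<m}"
  shows "x = y"
  using assms by (simp add: cong_def)

definition contracts_on :: "int \<Rightarrow> nat \<Rightarrow> (int \<Rightarrow> int) \<Rightarrow> bool" where
  "contracts_on P n f \<longleftrightarrow> f ` {0..<P ^ n} \<subseteq> {0..<P ^ n} \<and>
     (\<forall>b<n. \<forall>x\<in>{0..<P ^ n}. \<forall>x'\<in>{0..<P ^ n}.
        [x = x'] (mod P ^ b) \<longrightarrow> [f x = f x'] (mod P ^ Suc b))"

lemma contracts_on_comp:
  assumes "contracts_on P n f" and "contracts_on P n g"
  shows "contracts_on P n (f \<circ> g)"
proof -
  let ?V = "{0..<P ^ n}"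
  have "[f (g x) = f (g x')] (mod P ^ Suc b)"
    if "b < n" "x \<in> ?V" "x' \<in> ?V" "[x = x'] (mod P ^ b)" for b x x'
  proof -
    have "[g x = g x'] (mod P ^ Suc b)"
      using assms(2) that unfolding contracts_on_def by blast
    then have "[g x = g x'] (mod P ^ b)"
      by (rule cong_dvd_modulus) simp
    then show ?thesis
      using assms that unfolding contracts_on_def by (meson image_subset_iff)
  qed
  moreover have "(f \<circ> g) ` ?V \<subseteq> ?V"
    using assms unfolding contracts_on_def by (metis image_comp image_mono order_trans)
  ultimately show ?thesis
    unfolding contracts_on_def by auto
qed

lemma contracts_on_fold_upt:
  assumes "\<And>i. contracts_on P n (f i)"
  shows "contracts_on P n (fold f [0..<Suc k])"
proof (induction k)
  case (Suc k)
  have "fold f [0..<Suc (Suc k)] = f (Suc k) \<circ> fold f [0..<Suc k]"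
    by (simp add: comp_assoc)
  then show ?case
    using contracts_on_comp[OF assms Suc.IH] by (simp only:)
qed (simp add: assms)

text \<open>The \<open>b\<close>-th iterate identifies all points modulo \<open>P^b\<close>, so the \<open>n\<close>-th iterate is constant.\<close>
lemma contracts_on_fixpoint:
  assumes "P > 0" and f: "contracts_on P n f"
  obtains c where "c \<in> {0..<P ^ n}" and "f c = c"
proof -
  let ?V = "{0..<P ^ n}"
  have maps: "(f ^^ b) x \<in> ?V" if "x \<in> ?V" for b x
    using that f unfolding contracts_on_def by (induction b) (auto simp del: atLeastLessThan_iff)
  have collapse: "[(f ^^ b) x = (f ^^ b) x'] (mod P ^ b)"
    if "b \<le> n" "x \<in> ?V" "x' \<in> ?V" for b x x'
    using that(1)
  proof (induction b)
    case (Suc b)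
    then show ?case
      using f maps[OF that(2), of b] maps[OF that(3), of b] by (simp add: contracts_on_def)
  qed simp
  define c where "c = (f ^^ n) 0"
  have "0 \<in> ?V"
    using \<open>P > 0\<close> by simp
  then have "c \<in> ?V" and "f 0 \<in> ?V"
    using maps[of 0 n] maps[of 0 1] by (simp_all add: c_def)
  have "f c = (f ^^ n) (f 0)"
    by (simp add: c_def funpow_swap1)
  then have "[f c = c] (mod P ^ n)"
    using collapse[of n "f 0" 0] \<open>0 \<in> ?V\<close> \<open>f 0 \<in> ?V\<close> by (simp add: c_def)
  moreover have "f c \<in> ?V"
    using maps[OF \<open>c \<in> ?V\<close>, of 1] by simp
  ultimately have "f c = c"
    using \<open>c \<in> ?V\<close> by (rule cong_less_modulus_unique_int)
  with \<open>c \<in> ?V\<close> show ?thesis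
    by (rule that)
qed

definition gamma_closed_walks :: "nat \<Rightarrow> nat \<Rightarrow> int \<Rightarrow> nat \<Rightarrow> int list set" where
  "gamma_closed_walks p n q k = {xs. length xs = k \<and> set xs \<subseteq> gamma_vertices p n \<and>
     (\<forall>i<k. gamma_edge p n q (xs ! i) (xs ! ((i + 1) mod k)))}"

lemma gamma_cycles_eq_card: "gamma_cycles p n q k = card (gamma_closed_walks p n q k)"
  by (simp add: gamma_cycles_def gamma_closed_walks_def)

lemma gamma_closed_walk_edge_into:
  assumes "xs \<in> gamma_closed_walks p n q k" and "i < k"
  shows "gamma_edge p n q (xs ! ((i + k - 1) mod k)) (xs ! i)"
proof -
  define j where "j = (i + k - 1) mod k"
  have "(j + 1) mod k = (i + k - 1 + 1) mod k"
    by (simp add: j_def mod_Suc_eq)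
  also have "\<dots> = i"
    using assms(2) by simp
  finally have "(j + 1) mod k = i" .
  moreover have "j < k"
    using assms(2) by (simp add: j_def)
  ultimately show ?thesis
    using assms(1) unfolding gamma_closed_walks_def j_def[symmetric] by auto
qed

definition gamma_succ :: "nat \<Rightarrow> nat \<Rightarrow> int \<Rightarrow> int \<Rightarrow> int \<Rightarrow> int" where
  "gamma_succ p n q c x = (SOME z. gamma_edge p n q x z \<and> z mod int p = c)"

context
  fixes p n :: nat and q :: int
  assumes p: "prime p" and n: "n \<ge> 1" and q: "coprime q (int p)"
begin

lemma gamma_edge_target:
  assumes "gamma_edge p n q x z"
  shows "z \<in> gamma_vertices p n" and "\<not> int p dvd z"
proof -
  obtain y :: nat where z: "z = q ^ y mod int p ^ n"
    using assms unfolding gamma_edge_def by blast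
  then show "z \<in> gamma_vertices p n"
    using prime_gt_0_nat[OF p] by (simp add: gamma_vertices_def)
  have "int p dvd int p ^ n"
    using n by (simp add: dvd_power)
  then have "z mod int p = q ^ y mod int p"
    using z by (simp add: mod_mod_cancel)
  moreover have "\<not> int p dvd q ^ y"
  proof
    assume "int p dvd q ^ y"
    moreover have "coprime (q ^ y) (int p)"
      using q by simp
    ultimately have "is_unit (int p)"
      by (meson coprime_common_divisor dvd_refl)
    then show False
      using prime_gt_1_nat[OF p] by simp
  qed
  ultimately show "\<not> int p dvd z"
    by (simp add: dvd_eq_mod_eq_0)
qed

lemma gamma_edge_contract:
  assumes "b < n" and "gamma_edge p n q x z" and "gamma_edge p n q x' z'"
    and "[x = x'] (mod int p ^ b)" and "[z = z'] (mod int p)"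
  shows "[z = z'] (mod int p ^ Suc b)"
proof -
  obtain y where y: "[int y = x] (mod int p ^ n)" and z: "[z = q ^ y] (mod int p ^ n)"
    using assms(2) unfolding gamma_edge_def by (auto simp: cong_def)
  obtain y' where y': "[int y' = x'] (mod int p ^ n)" and z': "[z' = q ^ y'] (mod int p ^ n)"
    using assms(3) unfolding gamma_edge_def by (auto simp: cong_def)
  have dvd: "int p ^ c dvd int p ^ n" if "c \<le> n" for c
    using that by (rule le_imp_power_dvd)
  have "[int y = int y'] (mod int p ^ b)"
    using cong_dvd_modulus[OF y dvd] cong_dvd_modulus[OF y' dvd] \<open>b < n\<close> assms(4)
    by (metis cong_sym cong_trans less_imp_le)
  moreover have "[q ^ y = q ^ y'] (mod int p)"
    using cong_dvd_modulus[OF z dvd[of 1]] cong_dvd_modulus[OF z' dvd[of 1]] n assms(5)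
    by (metis cong_sym cong_trans power_one_right)
  ultimately have "[q ^ y = q ^ y'] (mod int p ^ Suc b)"
    by (rule power_cong_prime_power_lift[OF p q])
  then show ?thesis
    using cong_dvd_modulus[OF z dvd] cong_dvd_modulus[OF z' dvd] \<open>b < n\<close>
    by (metis Suc_leI cong_sym cong_trans)
qed

lemma gamma_closed_walk_residue:
  assumes "xs \<in> gamma_closed_walks p n q k" and "x \<in> set xs"
  shows "x mod int p \<in> {1..int p - 1}"
proof -
  obtain i where "i < k" and "x = xs ! i"
    using assms unfolding gamma_closed_walks_def by (auto simp: in_set_conv_nth)
  then have "\<not> int p dvd x"
    using gamma_edge_target(2) gamma_closed_walk_edge_into[OF assms(1)] by blast
  moreover have "0 \<le> x mod int p" "x mod int p < int p"
    using prime_gt_0_nat[OF p] by simp_all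
  ultimately show ?thesis
    by (simp add: dvd_eq_mod_eq_0)
qed

lemma gamma_closed_walks_residues_inj:
  "inj_on (map (\<lambda>x. x mod int p)) (gamma_closed_walks p n q k)"
proof (rule inj_onI)
  fix xs xs' assume xs: "xs \<in> gamma_closed_walks p n q k" and xs': "xs' \<in> gamma_closed_walks p n q k"
    and res: "map (\<lambda>x. x mod int p) xs = map (\<lambda>x. x mod int p) xs'"
  have len: "length xs = k" "length xs' = k"
    using xs xs' by (simp_all add: gamma_closed_walks_def)
  have "\<forall>i<k. [xs ! i = xs' ! i] (mod int p ^ b)" if "b \<le> n" for b
    using that
  proof (induction b)
    case (Suc b)
    show ?case
    proof (intro allI impI)
      fix i assume "i < k"
      define j where "j = (i + k - 1) mod k"
      have "j < k"
        using \<open>i < k\<close> by (simp add: j_def)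
      have "[xs ! i = xs' ! i] (mod int p)"
        using res \<open>i < k\<close> len by (metis cong_def nth_map)
      then show "[xs ! i = xs' ! i] (mod int p ^ Suc b)"
        using gamma_edge_contract[of b] Suc \<open>j < k\<close> j_def
          gamma_closed_walk_edge_into[OF xs \<open>i < k\<close>] gamma_closed_walk_edge_into[OF xs' \<open>i < k\<close>]
        by simp
    qed
  qed simp
  then have congs: "\<forall>i<k. [xs ! i = xs' ! i] (mod int p ^ n)"
    by simp
  have vs: "set xs \<subseteq> {0..<int p ^ n}" "set xs' \<subseteq> {0..<int p ^ n}"
    using xs xs' by (simp_all add: gamma_closed_walks_def gamma_vertices_def)
  show "xs = xs'"
  proof (intro nth_equalityI)
    fix i assume "i < length xs"
    then have "xs ! i \<in> set xs" "xs' ! i \<in> set xs'"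
      using len by simp_all
    then have "xs ! i \<in> {0..<int p ^ n}" "xs' ! i \<in> {0..<int p ^ n}"
      using vs by blast+
    then show "xs ! i = xs' ! i"
      using congs len \<open>i < length xs\<close> by (metis cong_less_modulus_unique_int)
  qed (simp add: len)
qed

lemma card_gamma_closed_walks_le: "card (gamma_closed_walks p n q k) \<le> (p - 1) ^ k"
proof -
  let ?L = "{xs. set xs \<subseteq> {1..int p - 1} \<and> length xs = k}"
  have "map (\<lambda>x. x mod int p) ` gamma_closed_walks p n q k \<subseteq> ?L"
    using gamma_closed_walk_residue by (auto simp: gamma_closed_walks_def)
  then have "card (gamma_closed_walks p n q k) \<le> card ?L"
    using gamma_closed_walks_residues_inj by (intro card_inj_on_le) (auto intro: finite_lists_length_eq)
  also have "card ?L = (p - 1) ^ k"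
    by (simp add: card_lists_length_eq nat_diff_distrib')
  finally show ?thesis .
qed

context
  assumes gen: "\<forall>r\<in>{1..int p - 1}. \<exists>j::nat. [q ^ j = r] (mod int p)"
begin

text \<open>The exponent \<open>y = x + p^n t\<close> satisfies \<open>q^y \<equiv> q^(x+t) (mod p)\<close> by Fermat, and
  \<open>t = j + (p - 2) x\<close> makes \<open>x + t \<equiv> j (mod p - 1)\<close>.\<close>
lemma gamma_edge_exists_residue:
  assumes x: "x \<in> gamma_vertices p n" and c: "c \<in> {1..int p - 1}"
  shows "\<exists>z. gamma_edge p n q x z \<and> z mod int p = c"
proof -
  obtain j :: nat where j: "[q ^ j = c] (mod int p)"
    using gen c by blast
  obtain x' :: nat where x': "x = int x'"
    using x by (metis atLeastLessThan_iff gamma_vertices_def nonneg_int_cases)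
  define t where "t = j + (p - 2) * x'"
  define y where "y = x' + p ^ n * t"
  obtain m where "p = m + 2"
    using prime_ge_2_nat[OF p] by (metis le_add_diff_inverse2)
  then have "x' + t = j + (p - 1) * x'"
    by (simp add: t_def algebra_simps)
  have "q ^ y = q ^ x' * (q ^ (p ^ n)) ^ t"
    by (simp add: y_def power_add power_mult)
  also have "[q ^ x' * (q ^ (p ^ n)) ^ t = q ^ x' * q ^ t] (mod int p)"
    by (intro cong_scalar_left cong_pow power_prime_power_cong_self[OF p])
  also have "q ^ x' * q ^ t = q ^ j * (q ^ (p - 1)) ^ x'"
    by (simp only: power_add[symmetric] power_mult[symmetric] \<open>x' + t = j + (p - 1) * x'\<close>)
  also have "[q ^ j * (q ^ (p - 1)) ^ x' = c * 1 ^ x'] (mod int p)"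
    by (intro cong_mult cong_pow j fermat_theorem_int[OF p q])
  finally have "[q ^ y = c] (mod int p)"
    by simp
  define z where "z = q ^ y mod int p ^ n"
  have "int p dvd int p ^ n"
    using n by (simp add: dvd_power)
  then have "z mod int p = c mod int p"
    using \<open>[q ^ y = c] (mod int p)\<close> by (simp add: z_def mod_mod_cancel cong_def)
  also have "\<dots> = c"
    using c by simp
  finally have "z mod int p = c" .
  moreover have "[int y = x] (mod int p ^ n)"
    by (simp add: y_def x' cong_def)
  then have "gamma_edge p n q x z"
    using x unfolding gamma_edge_def z_def by blast
  ultimately show ?thesis
    by blast
qed

lemma gamma_succ:
  assumes "x \<in> gamma_vertices p n" and "c \<in> {1..int p - 1}"
  shows "gamma_edge p n q x (gamma_succ p n q c x)" and "gamma_succ p n q c x mod int p = c"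
  using someI_ex[OF gamma_edge_exists_residue[OF assms]] by (simp_all add: gamma_succ_def)

lemma contracts_on_gamma_succ:
  assumes c: "c \<in> {1..int p - 1}"
  shows "contracts_on (int p) n (gamma_succ p n q c)"
  unfolding contracts_on_def
proof (intro conjI allI impI ballI)
  show "gamma_succ p n q c ` {0..<int p ^ n} \<subseteq> {0..<int p ^ n}"
    using gamma_edge_target(1)[OF gamma_succ(1)[OF _ c]] by (auto simp: gamma_vertices_def)
  fix b x x' assume "b < n" "x \<in> {0..<int p ^ n}" "x' \<in> {0..<int p ^ n}" "[x = x'] (mod int p ^ b)"
  then have "x \<in> gamma_vertices p n" "x' \<in> gamma_vertices p n"
    by (simp_all add: gamma_vertices_def)
  then show "[gamma_succ p n q c x = gamma_succ p n q c x'] (mod int p ^ Suc b)"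
    using gamma_edge_contract[OF \<open>b < n\<close> gamma_succ(1)[OF _ c] gamma_succ(1)[OF _ c] \<open>[x = x'] (mod int p ^ b)\<close>]
      gamma_succ(2)[OF _ c] by (simp add: cong_def)
qed

lemma gamma_closed_walk_with_residues:
  assumes "k \<ge> 1" and r: "length r = k" "set r \<subseteq> {1..int p - 1}"
  shows "r \<in> map (\<lambda>x. x mod int p) ` gamma_closed_walks p n q k"
proof -
  let ?V = "gamma_vertices p n"
  define f where "f i = gamma_succ p n q (r ! (Suc i mod k))" for i
  have res: "r ! (i mod k) \<in> {1..int p - 1}" for i
    using r \<open>k \<ge> 1\<close> by (intro subsetD[OF r(2)] nth_mem) simp
  have "contracts_on (int p) n (fold f [0..<Suc (k - 1)])"
    using contracts_on_gamma_succ[OF res] by (intro contracts_on_fold_upt) (simp add: f_def)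
  then obtain c where "c \<in> ?V" and c: "fold f [0..<k] c = c"
    using contracts_on_fixpoint[of "int p"] prime_gt_0_nat[OF p] \<open>k \<ge> 1\<close>
    by (auto simp: gamma_vertices_def)
  define w where "w i = fold f [0..<i] c" for i
  have w_Suc: "w (Suc i) = f i (w i)" for i
    by (simp add: w_def)
  have w_V: "w i \<in> ?V" for i
  proof (induction i)
    case (Suc i)
    then show ?case
      using gamma_edge_target(1)[OF gamma_succ(1)[OF Suc res]] by (simp add: w_Suc f_def)
  qed (simp add: w_def \<open>c \<in> ?V\<close>)
  have w_step: "gamma_edge p n q (w i) (w (Suc i))" "w (Suc i) mod int p = r ! (Suc i mod k)" for i
    using gamma_succ[OF w_V res] by (simp_all add: w_Suc f_def)
  have w_periodic: "w (i + k) = w i" for i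
  proof (induction i)
    case (Suc i)
    have "Suc (i + k) mod k = Suc i mod k"
      by (metis add_Suc mod_add_self2)
    then show ?case
      using Suc by (simp add: w_Suc f_def)
  qed (simp add: w_def c)
  define xs where "xs = map w [0..<k]"
  have "xs \<in> gamma_closed_walks p n q k"
    unfolding gamma_closed_walks_def
  proof (intro CollectI conjI allI impI)
    show "length xs = k" "set xs \<subseteq> ?V"
      using w_V by (auto simp: xs_def)
    fix i assume "i < k"
    have "xs ! ((i + 1) mod k) = w (Suc i)"
      using \<open>i < k\<close> w_periodic[of 0] by (cases "Suc i = k") (simp_all add: xs_def)
    then show "gamma_edge p n q (xs ! i) (xs ! ((i + 1) mod k))"
      using \<open>i < k\<close> w_step(1) by (simp add: xs_def)
  qed
  moreover have "map (\<lambda>x. x mod int p) xs = r"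
  proof (rule nth_equalityI)
    fix i assume "i < length (map (\<lambda>x. x mod int p) xs)"
    then have "i < k"
      by (simp add: xs_def)
    then have "w i = w (Suc (i + k - 1))" "Suc (i + k - 1) mod k = i"
      using w_periodic[of i] by simp_all
    then show "map (\<lambda>x. x mod int p) xs ! i = r ! i"
      using \<open>i < k\<close> w_step(2)[of "i + k - 1"] by (simp add: xs_def)
  qed (simp add: xs_def r)
  ultimately show ?thesis
    by blast
qed

lemma card_gamma_closed_walks_eq:
  assumes "k \<ge> 1"
  shows "card (gamma_closed_walks p n q k) = (p - 1) ^ k"
proof -
  let ?L = "{xs. set xs \<subseteq> {1..int p - 1} \<and> length xs = k}"
  have "map (\<lambda>x. x mod int p) ` gamma_closed_walks p n q k = ?L"
    using gamma_closed_walk_residue gamma_closed_walk_with_residues[OF assms]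
    by (auto simp: gamma_closed_walks_def)
  then have "card (gamma_closed_walks p n q k) = card ?L"
    using card_image[OF gamma_closed_walks_residues_inj] by metis
  also have "card ?L = (p - 1) ^ k"
    by (simp add: card_lists_length_eq nat_diff_distrib')
  finally show ?thesis .
qed

end

end

lemma residue_primroot_powers_cover:
  assumes p: "prime p" and g: "residue_primroot p (nat (q mod int p))"
  shows "\<forall>c\<in>{1..int p - 1}. \<exists>j::nat. [q ^ j = c] (mod int p)"
proof
  fix c :: int assume c: "c \<in> {1..int p - 1}"
  have "p > 1"
    using prime_gt_1_nat[OF p] .
  have "\<not> p dvd nat c"
    using c by (auto dest: dvd_imp_le)
  then have "nat c \<in> totatives p"
    using c p by (auto simp: totatives_def coprime_commute prime_imp_coprime)
  then obtain j where j: "nat (q mod int p) ^ j mod p = nat c"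
    using residue_primroot_is_generator[OF \<open>p > 1\<close> g] unfolding bij_betw_def by force
  have "[q = int (nat (q mod int p))] (mod int p)"
    using \<open>p > 1\<close> by (simp add: cong_def)
  then have "[q ^ j = int (nat (q mod int p)) ^ j] (mod int p)"
    by (rule cong_pow)
  moreover have "int (nat (q mod int p)) ^ j mod int p = c"
    using j c by (metis of_nat_mod of_nat_power atLeastAtMost_iff int_nat_eq order_trans zero_le_one)
  ultimately show "\<exists>j::nat. [q ^ j = c] (mod int p)"
    using c by (auto simp: cong_def)
qed

theorem theorem1:
  fixes p n k :: nat and q :: int
  assumes "prime p" and "n \<ge> 1" and "k \<ge> 1" and "gcd q (int p) = 1"
  shows "gamma_cycles p n q k \<le> (p - 1) ^ k
         \<and> (residue_primroot p (nat (q mod int p)) \<longrightarrow> gamma_cycles p n q k = (p - 1) ^ k)"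
proof -
  have q: "coprime q (int p)"
    using assms(4) by (simp add: coprime_iff_gcd_eq_1)
  show ?thesis
    unfolding gamma_cycles_eq_card
    using card_gamma_closed_walks_le[OF assms(1,2) q]
      card_gamma_closed_walks_eq[OF assms(1,2) q residue_primroot_powers_cover[OF assms(1)] assms(3)]
    by blast
qed

end
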